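(* Let $k\ge 2$ and define the formal power series $D^{(k)}(x,y)=\sum_{n\ge 2}\sum_{j=k}^{(k-1)n} d^{(k)}_{n,j}\,x^j y^n\in\mathbb{Q}[x][[y]]$. Then, as formal power series in $y$ with coefficients in $\mathbb{Q}[x]$, $$(1+x^k y-x)\,D^{(k)}(x,y)=x^k y\,S^{(k)}(y)-x^{2k-1}y^2,$$ i.e. $D^{(k)}(x,y)=\dfrac{x^k yS^{(k)}(y)-x^{2k-1}y^2}{1+x^ky-x}$.
   Context: For $i\ge 1$, $s^{(k)}_i=\frac{k-1}{ki-1}\binom{ki-1}{i-1}$, and $S^{(k)}(z)=\sum_{i\ge1}s^{(k)}_i z^i$. For $n\ge2$ and $k\le j\le (k-1)n$, $d^{(k)}_{n,j}=\binom{kn-2-j}{n-2}-\sum_{\ell=1}^{\,n-\lceil j/(k-1)\rceil} s^{(k)}_\ell\binom{k(n-\ell)-1-j}{n-\ell-1}$; equivalently $d^{(k)}_{n,j}$ is the number of lattice paths with unit south and west steps from $((k-1)n,n-1)$ to $(j,1)$ that never touch the line $(k-1)y=x$. *)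

theory Defs
  imports "HOL-Computational_Algebra.Polynomial" "HOL-Computational_Algebra.Formal_Power_Series"
begin

definition s_coeff :: "nat \<Rightarrow> nat \<Rightarrow> rat" where
  "s_coeff k i = (of_nat (k - 1) / of_nat (k * i - 1)) * of_nat ((k * i - 1) choose (i - 1))"

definition S_fps :: "nat \<Rightarrow> rat poly fps" where
  "S_fps k = Abs_fps (\<lambda>i. if i \<ge> 1 then [:s_coeff k i:] else 0)"

text \<open>d^(k)_{n,j}; all natural-number subtractions below are nonnegative in the stated ranges.\<close>
definition d_coeff :: "nat \<Rightarrow> nat \<Rightarrow> nat \<Rightarrow> rat" where
  "d_coeff k n j = of_nat ((k * n - 2 - j) choose (n - 2))
     - (\<Sum>l = 1..n - nat \<lceil>real j / real (k - 1)\<rceil>.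
          s_coeff k l * of_nat ((k * (n - l) - 1 - j) choose (n - l - 1)))"

definition D_fps :: "nat \<Rightarrow> rat poly fps" where
  "D_fps k = Abs_fps (\<lambda>n. if n \<ge> 2 then (\<Sum>j = k..(k - 1) * n. monom (d_coeff k n j) j) else 0)"

end

theory Submission
  imports Defs
begin

(* Comparing coefficients of x^j y^n, the identity says that d(n, j - 1) = d(n, j) + d(n - 1, j - k)
   for k < j <= (k - 1) n, with boundary values d(n, k) = s(n - 1) and d(n, (k - 1) n) = 1.
   Once the sum defining d(n, j) is extended to l <= n - 2, Pascal's rule applied to every binomial
   gives the recurrence up to a single boundary term.  That term, and the value d(n, k), are
   instances of the convolution
     sum_q R_q(x) binom(y + k (N - q) - 1, N - q) = binom(x + y + k N - 1, N)
   for the Raney numbers R_q(x) = x / (x + k q) binom(x + k q, q), because s_i = R_(i-1)(k - 1);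
   the convolution follows by induction from R_q(x + 1) = R_q(x) + R_(q-1)(x + k). *)

(* The Raney number x / (x + k q) * binom(x + k q, q) in division-free form, see raney_closed_form. *)
definition raney :: "nat \<Rightarrow> nat \<Rightarrow> nat \<Rightarrow> int" where
  "raney k q x =
     (if q = 0 then 1 else int ((x + k * q) choose q) - int k * int ((x + k * q - 1) choose (q - 1)))"

lemma raney_0_left [simp]: "raney k 0 x = 1"
  by (simp add: raney_def)

lemma raney_closed_form: "int (x + k * q) * raney k q x = int x * int ((x + k * q) choose q)"
proof (cases "q = 0")
  case True
  then show ?thesis by (simp add: raney_def)
next
  case False
  define m where "m = x + k * q"
  have "q * (m choose q) = m * ((m - 1) choose (q - 1))"
    using times_binomial_minus1_eq[of q m] False by simp
  then have "int m * int ((m - 1) choose (q - 1)) = int q * int (m choose q)"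
    by (metis of_nat_mult)
  moreover have "int m = int x + int k * int q" by (simp add: m_def)
  ultimately show ?thesis
    using False by (simp add: raney_def m_def[symmetric] algebra_simps)
qed

lemma raney_0_right:
  assumes "k \<ge> 1" "q \<ge> 1"
  shows "raney k q 0 = 0"
  using raney_closed_form[of 0 k q] assms by simp

lemma raney_Suc_right:
  assumes "k \<ge> 1" "q \<ge> 1"
  shows "raney k q (Suc x) = raney k q x + raney k (q - 1) (x + k)"
proof -
  obtain p where q: "q = Suc p" using assms by (cases q) auto
  define m where "m = x + k * q"
  have m: "m \<ge> 1" using assms by (simp add: m_def q)
  have "Suc x + k * q = Suc m" "x + k + k * p = m" by (simp_all add: m_def q algebra_simps)
  moreover have "Suc m choose Suc p = (m choose Suc p) + (m choose p)" by simp
  moreover have "p \<ge> 1 \<Longrightarrow> m choose p = ((m - 1) choose p) + ((m - 1) choose (p - 1))"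
    using choose_reduce_nat[of m p] m by simp
  ultimately show ?thesis
    by (cases "p = 0") (simp_all add: raney_def q m_def[symmetric] algebra_simps)
qed

lemma raney_choose_convolution:
  assumes k: "k \<ge> 1"
  shows "(\<Sum>q\<le>N. raney k q x * int ((y + k * (N - q) - 1) choose (N - q)))
           = int ((x + y + k * N - 1) choose N)"
proof (induction N arbitrary: x)
  case 0
  then show ?case by simp
next
  case (Suc N)
  note IH_N = Suc.IH
  let ?c = "\<lambda>q. int ((y + k * (Suc N - q) - 1) choose (Suc N - q))"
  show ?case
  proof (induction x)
    case 0
    have "(\<Sum>q\<le>Suc N. raney k q 0 * ?c q) = raney k 0 0 * ?c 0"
      using raney_0_right[OF k] by (subst sum.atMost_Suc_shift) simp
    then show ?case by simp
  next
    case (Suc x)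
    have step: "raney k (Suc q) (Suc x) = raney k (Suc q) x + raney k q (x + k)" for q
      using raney_Suc_right[OF k] by simp
    have "(\<Sum>q\<le>Suc N. raney k q (Suc x) * ?c q)
        = (\<Sum>q\<le>Suc N. raney k q x * ?c q) + (\<Sum>q\<le>N. raney k q (x + k) * ?c (Suc q))"
      by (simp only: sum.atMost_Suc_shift raney_0_left step distrib_right sum.distrib add.assoc)
    also have "\<dots> = int ((x + y + k * Suc N - 1) choose Suc N) + int ((x + k + y + k * N - 1) choose N)"
      using Suc.IH IH_N by simp
    also have "\<dots> = int ((Suc x + y + k * Suc N - 1) choose Suc N)"
    proof -
      define a where "a = x + y + k * Suc N - 1"
      have shift: "Suc x + y + k * Suc N - 1 = Suc a" "x + k + y + k * N - 1 = a"
        using k by (simp_all add: a_def)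
      have "int (a choose Suc N) + int (a choose N) = int (Suc a choose Suc N)" by simp
      then show ?thesis unfolding a_def[symmetric] shift .
    qed
    finally show ?case .
  qed
qed

lemma s_coeff_eq_raney:
  assumes k: "k \<ge> 2" and i: "i \<ge> 1"
  shows "s_coeff k i = of_int (raney k (i - 1) (k - 1))"
proof -
  define m where "m = k * i - 1"
  have m: "k - 1 + k * (i - 1) = m" "m > 0"
    using i k by (cases i; simp add: m_def)+
  have "int m * raney k (i - 1) (k - 1) = int (k - 1) * int (m choose (i - 1))"
    using raney_closed_form[of "k - 1" k "i - 1"] unfolding m(1) .
  then have "(of_nat m :: rat) * of_int (raney k (i - 1) (k - 1))
      = of_nat (k - 1) * of_nat (m choose (i - 1))"
    by (metis of_int_mult of_int_of_nat_eq)
  then show ?thesis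
    unfolding s_coeff_def m_def[symmetric] using m by (simp add: field_simps)
qed

lemma s_coeff_choose_convolution:
  assumes k: "k \<ge> 2"
  shows "(\<Sum>l = 1..Suc N. s_coeff k l * of_nat ((y + k * (Suc N - l) - 1) choose (Suc N - l)))
           = of_nat ((k - 1 + y + k * N - 1) choose N)"
proof -
  have "(\<Sum>l = 1..Suc N. s_coeff k l * of_nat ((y + k * (Suc N - l) - 1) choose (Suc N - l)))
      = of_int (\<Sum>q\<le>N. raney k q (k - 1) * int ((y + k * (N - q) - 1) choose (N - q)))"
    unfolding One_nat_def sum.atLeast_Suc_atMost_Suc_shift
    using k by (simp add: atLeast0AtMost s_coeff_eq_raney)
  also have "\<dots> = of_nat ((k - 1 + y + k * N - 1) choose N)"
    using k by (simp only: raney_choose_convolution[of k] of_int_of_nat_eq)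
  finally show ?thesis .
qed

(* d_coeff with the sum extended to l <= n - 2, which removes the ceiling; the added terms vanish
   for j >= k. *)
definition d_full :: "nat \<Rightarrow> nat \<Rightarrow> nat \<Rightarrow> rat" where
  "d_full k n j = of_nat ((k * n - 2 - j) choose (n - 2))
     - (\<Sum>l = 1..n - 2. s_coeff k l * of_nat ((k * (n - l) - 1 - j) choose (n - l - 1)))"

lemma d_coeff_eq_d_full:
  assumes k: "k \<ge> 2" and j: "k \<le> j"
  shows "d_coeff k n j = d_full k n j"
proof -
  define c where "c = nat \<lceil>real j / real (k - 1)\<rceil>"
  have k1: "real (k - 1) > 0" using k by simp
  have "real j / real (k - 1) > 1" using k1 j k by (simp add: field_simps)
  then have "1 < \<lceil>real j / real (k - 1)\<rceil>" by (simp add: less_ceiling_iff)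
  then have c: "c \<ge> 2" unfolding c_def by linarith
  let ?g = "\<lambda>l. s_coeff k l * of_nat ((k * (n - l) - 1 - j) choose (n - l - 1))"
  have "sum ?g {1..n - c} = sum ?g {1..n - 2}"
  proof (rule sum.mono_neutral_left)
    show "\<forall>l \<in> {1..n - 2} - {1..n - c}. ?g l = 0"
    proof
      fix l assume l: "l \<in> {1..n - 2} - {1..n - c}"
      define t where "t = n - l"
      have t: "t \<ge> 2" "t < c" using l unfolding t_def by auto
      then have "int t < \<lceil>real j / real (k - 1)\<rceil>" unfolding c_def by linarith
      then have "real t < real j / real (k - 1)" by (simp add: less_ceiling_iff)
      then have "real (k * t) < real (j + t)" using k1 k by (simp add: field_simps)
      then have "k * t - 1 - j < t - 1" using t by linarith
      then show "?g l = 0" unfolding t_def by simp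
    qed
  qed (use c in auto)
  then show ?thesis unfolding d_coeff_def d_full_def c_def by simp
qed

lemma d_full_low:
  assumes k: "k \<ge> 2" and n: "n \<ge> 2" and j: "j \<le> k"
  shows "d_full k n j = s_coeff k (n - 1)"
proof -
  define N where "N = n - 2"
  have N: "n = Suc (Suc N)" using n by (simp add: N_def)
  let ?y = "k - j"
  have "(\<Sum>l = 1..N. s_coeff k l * of_nat ((?y + k * (Suc N - l) - 1) choose (Suc N - l)))
      = (\<Sum>l = 1..n - 2. s_coeff k l * of_nat ((k * (n - l) - 1 - j) choose (n - l - 1)))"
  proof (rule sum.cong)
    fix l assume "l \<in> {1..n - 2}"
    then have "k * (Suc N - l) + k = k * (n - l)" by (auto simp: N Suc_diff_le algebra_simps)
    then have "?y + k * (Suc N - l) - 1 = k * (n - l) - 1 - j" using j by linarith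
    then show "s_coeff k l * of_nat ((?y + k * (Suc N - l) - 1) choose (Suc N - l))
        = s_coeff k l * of_nat ((k * (n - l) - 1 - j) choose (n - l - 1))" by (simp add: N)
  qed (simp add: N)
  moreover have "k - 1 + ?y + k * N - 1 = k * n - 2 - j" using k j by (simp add: N algebra_simps)
  ultimately show ?thesis
    using s_coeff_choose_convolution[OF k, where N = N and y = "k - j"] by (simp add: d_full_def N)
qed

lemma d_full_two: "d_full k 2 j = 1"
  by (simp add: d_full_def)

lemma d_full_top:
  assumes k: "k \<ge> 2" and n: "n \<ge> 2"
  shows "d_full k n ((k - 1) * n) = 1"
proof -
  have kn: "k * n = (k - 1) * n + n" using k by (simp add: algebra_simps)
  have "(\<Sum>l = 1..n - 2. s_coeff k l * of_nat ((k * (n - l) - 1 - (k - 1) * n) choose (n - l - 1))) = 0"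
  proof (rule sum.neutral, rule ballI)
    fix l assume "l \<in> {1..n - 2}"
    then have l: "1 \<le> l" "l \<le> n - 2" by auto
    then have "n - l + l = n" by simp
    then have "k * (n - l) + k * l = k * n" by (metis add_mult_distrib2)
    moreover have "k * l \<ge> 2 * l" using k by simp
    ultimately have "k * (n - l) - 1 - (k - 1) * n < n - l - 1" using kn l by linarith
    then show "s_coeff k l * of_nat ((k * (n - l) - 1 - (k - 1) * n) choose (n - l - 1)) = 0" by simp
  qed
  moreover have "k * n - 2 - (k - 1) * n = n - 2" using kn by simp
  ultimately show ?thesis by (simp add: d_full_def)
qed

(* Pascal's rule for binom(k t - 1 - j, t - 1) as a function of j; for t = 2 and j >= 2 k the truncated
   subtraction makes it fail by one. *)
lemma choose_diagonal_pred:
  assumes t: "t \<ge> 2" and k: "k \<ge> 1" and j: "k \<le> j"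
  shows "((k * t - 1 - (j - 1)) choose (t - 1)) + (if t = 2 \<and> 2 * k \<le> j then 1 else 0)
       = ((k * t - 1 - j) choose (t - 1)) + ((k * (t - 1) - 1 - (j - k)) choose (t - 2))"
proof -
  have shift: "k * (t - 1) - 1 - (j - k) = k * t - 1 - j"
    using j by (simp add: diff_mult_distrib2)
  show ?thesis
  proof (cases "t = 2")
    case True
    then show ?thesis using j k by (auto simp: shift)
  next
    case False
    define u where "u = t - 2"
    have u: "t - 1 = Suc u" "t - 2 = u" "u \<ge> 1" using t False by (simp_all add: u_def)
    have "k * t - 1 - (j - 1) = k * t - j" "k * t - 1 - j = k * t - j - 1" using j k by auto
    then show ?thesis
      unfolding shift unfolding u(1,2) using False u(3) by (cases "k * t - j") simp_all
  qed
qed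

lemma sum_choose_diagonal_pred:
  fixes a :: "nat \<Rightarrow> 'a :: comm_ring_1"
  assumes k: "k \<ge> 1" and n: "n \<ge> 3" and j: "k \<le> j"
  shows "(\<Sum>l = 1..n - 2. a l * of_nat ((k * (n - l) - 1 - (j - 1)) choose (n - l - 1)))
           + (if 2 * k \<le> j then a (n - 2) else 0)
         = (\<Sum>l = 1..n - 2. a l * of_nat ((k * (n - l) - 1 - j) choose (n - l - 1)))
           + (\<Sum>l = 1..n - 1 - 2. a l * of_nat ((k * (n - 1 - l) - 1 - (j - k)) choose (n - 1 - l - 1)))
           + a (n - 2)"
proof -
  let ?T = "\<lambda>t i. (k * t - 1 - i) choose (t - 1)"
  let ?S = "\<lambda>m f. \<Sum>l = 1..m. a l * of_nat (f l)"
  have pascal: "?T (n - l) (j - 1) + (if l = n - 2 \<and> 2 * k \<le> j then 1 else 0)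
      = ?T (n - l) j + ?T (n - 1 - l) (j - k)" if "l \<in> {1..n - 2}" for l
  proof -
    from that have "2 \<le> n - l" "(n - l = 2) = (l = n - 2)" by auto
    then show ?thesis using choose_diagonal_pred[of "n - l" k j] k j by (simp add: diff_commute)
  qed
  have "?S (n - 2) (\<lambda>l. ?T (n - l) (j - 1)) + (if 2 * k \<le> j then a (n - 2) else 0)
      = ?S (n - 2) (\<lambda>l. ?T (n - l) (j - 1) + (if l = n - 2 \<and> 2 * k \<le> j then 1 else 0))"
  proof -
    have "(\<Sum>l = 1..n - 2. a l * of_nat (if l = n - 2 \<and> 2 * k \<le> j then 1 else 0))
        = (if 2 * k \<le> j then a (n - 2) else 0)"
      using n by (auto simp: if_distrib[of of_nat] if_distrib[of "(*) _"] cong: if_cong)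
    then show ?thesis by (simp add: sum.distrib distrib_left)
  qed
  also have "\<dots> = ?S (n - 2) (\<lambda>l. ?T (n - l) j + ?T (n - 1 - l) (j - k))"
    by (rule sum.cong[OF refl]) (simp only: pascal)
  also have "\<dots> = ?S (n - 2) (\<lambda>l. ?T (n - l) j) + ?S (n - 2) (\<lambda>l. ?T (n - 1 - l) (j - k))"
    by (simp only: of_nat_add distrib_left sum.distrib)
  also have "?S (n - 2) (\<lambda>l. ?T (n - 1 - l) (j - k))
      = ?S (n - 1 - 2) (\<lambda>l. ?T (n - 1 - l) (j - k)) + a (n - 2)"
  proof -
    have "n - 2 = Suc (n - 1 - 2)" using n by simp
    then show ?thesis by (simp only: sum.cl_ivl_Suc) (simp add: n)
  qed
  finally show ?thesis by (simp only: add.assoc)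
qed

lemma d_full_pred:
  assumes k: "k \<ge> 1" and n: "n \<ge> 3" and j: "k \<le> j" "j + 2 \<le> k * n"
  shows "d_full k n (j - 1)
           = d_full k n j + d_full k (n - 1) (j - k) - (if j < 2 * k then s_coeff k (n - 2) else 0)"
proof -
  have top: "(k * n - 2 - (j - 1)) choose (n - 2)
      = ((k * n - 2 - j) choose (n - 2)) + ((k * (n - 1) - 2 - (j - k)) choose (n - 1 - 2))"
  proof -
    have shift: "k * n - 2 - (j - 1) = Suc (k * n - 2 - j)" "n - 2 = Suc (n - 1 - 2)"
      "k * (n - 1) - 2 - (j - k) = k * n - 2 - j"
      using k n j by (simp_all add: diff_mult_distrib2)
    show ?thesis unfolding shift by simp
  qed
  have "(if 2 * k \<le> j then s_coeff k (n - 2) else 0)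
      = s_coeff k (n - 2) - (if j < 2 * k then s_coeff k (n - 2) else 0)"
    by simp
  with sum_choose_diagonal_pred[OF k n j(1), of "s_coeff k"] show ?thesis
    unfolding d_full_def top of_nat_add by linarith
qed

definition D_coeff :: "nat \<Rightarrow> nat \<Rightarrow> nat \<Rightarrow> rat" where
  "D_coeff k n j = (if 2 \<le> n \<and> k \<le> j \<and> j \<le> (k - 1) * n then d_coeff k n j else 0)"

lemma coeff_D_fps_nth: "coeff (fps_nth (D_fps k) n) j = D_coeff k n j"
  by (auto simp: D_fps_def D_coeff_def coeff_sum not_le)

lemma D_coeff_eq_d_full:
  assumes "k \<ge> 2" "2 \<le> n" "k \<le> j" "j \<le> (k - 1) * n"
  shows "D_coeff k n j = d_full k n j"
  using assms by (simp add: D_coeff_def d_coeff_eq_d_full)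

lemma D_coeff_pred:
  assumes k: "k \<ge> 2" and n: "n \<ge> 2" and j: "k < j" "j \<le> (k - 1) * n"
  shows "D_coeff k n (j - 1) = D_coeff k n j + D_coeff k (n - 1) (j - k)"
proof -
  have d: "D_coeff k n (j - 1) = d_full k n (j - 1)" "D_coeff k n j = d_full k n j"
    using assms by (simp_all add: D_coeff_eq_d_full)
  show ?thesis
  proof (cases "n = 2")
    case True
    then have "D_coeff k (n - 1) (j - k) = 0" by (simp add: D_coeff_def)
    with d True show ?thesis by (simp add: d_full_two)
  next
    case False
    then have n3: "n \<ge> 3" using n by simp
    have kn: "(k - 1) * n = (k - 1) * (n - 1) + (k - 1)" using n by (cases n) simp_all
    have D_prev: "D_coeff k (n - 1) (j - k)
        = d_full k (n - 1) (j - k) - (if j < 2 * k then s_coeff k (n - 2) else 0)"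
    proof (cases "j < 2 * k")
      case True
      then have "D_coeff k (n - 1) (j - k) = 0" by (auto simp: D_coeff_def)
      moreover have "d_full k (n - 1) (j - k) = s_coeff k (n - 1 - 1)"
        using True k n3 by (intro d_full_low) simp_all
      ultimately show ?thesis using True by (simp add: numeral_2_eq_2)
    next
      case False
      have "D_coeff k (n - 1) (j - k) = d_full k (n - 1) (j - k)"
        using False k n3 j kn by (intro D_coeff_eq_d_full) linarith+
      with False show ?thesis by simp
    qed
    have "j + 2 \<le> k * n" using j n by (simp add: algebra_simps)
    then have "d_full k n (j - 1)
        = d_full k n j + d_full k (n - 1) (j - k) - (if j < 2 * k then s_coeff k (n - 2) else 0)"
      using k n3 j by (intro d_full_pred) simp_all
    then show ?thesis unfolding d D_prev by simp
  qed
qed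

lemma D_coeff_top:
  assumes "k \<ge> 2" "n \<ge> 2"
  shows "D_coeff k n ((k - 1) * n) = 1"
proof -
  have "k \<le> (k - 1) * 2" using assms by simp
  also have "\<dots> \<le> (k - 1) * n" using assms by simp
  finally show ?thesis using D_coeff_eq_d_full[OF assms] d_full_top[OF assms] by simp
qed

lemma D_coeff_pred_above_top:
  assumes k: "k \<ge> 2" and n: "n \<ge> 2" and j: "(k - 1) * n < j"
  shows "D_coeff k n (j - 1)
           = D_coeff k n j + D_coeff k (n - 1) (j - k) + (if n = 2 \<and> j = 2 * k - 1 then 1 else 0)"
proof -
  have kn: "(k - 1) * n = (k - 1) * (n - 1) + (k - 1)" using n by (cases n) simp_all
  have D_j: "D_coeff k n j = 0" using j by (simp add: D_coeff_def)
  consider "j = (k - 1) * n + 1" | "(k - 1) * n + 1 < j" using j by linarith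
  then show ?thesis
  proof cases
    case 1
    have "D_coeff k n (j - 1) = 1" using 1 D_coeff_top[OF k n] by simp
    moreover have "D_coeff k (n - 1) (j - k) = (if n = 2 then 0 else 1)"
    proof (cases "n = 2")
      case True
      then show ?thesis by (simp add: D_coeff_def)
    next
      case False
      moreover have "j - k = (k - 1) * (n - 1)" using 1 kn k by simp
      ultimately show ?thesis using D_coeff_top[OF k, of "n - 1"] n by simp
    qed
    moreover have "n = 2 \<Longrightarrow> j = 2 * k - 1" using 1 k by simp
    ultimately show ?thesis using D_j by auto
  next
    case 2
    then have "\<not> j - 1 \<le> (k - 1) * n" "\<not> j - k \<le> (k - 1) * (n - 1)"
      "\<not> (n = 2 \<and> j = 2 * k - 1)"
      using kn k by auto
    then show ?thesis using D_j by (simp add: D_coeff_def)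
  qed
qed

lemma D_coeff_recurrence:
  assumes k: "k \<ge> 2"
  shows "D_coeff k n j - (if j = 0 then 0 else D_coeff k n (j - 1))
           + (if n = 0 \<or> j < k then 0 else D_coeff k (n - 1) (j - k))
         = (if 2 \<le> n \<and> j = k then s_coeff k (n - 1) else 0) - (if n = 2 \<and> j = 2 * k - 1 then 1 else 0)"
proof (cases "n \<ge> 2")
  case False
  then show ?thesis by (auto simp: D_coeff_def)
next
  case n: True
  have "k \<le> (k - 1) * 2" using k by simp
  also have "\<dots> \<le> (k - 1) * n" using n by simp
  finally have k_le: "k \<le> (k - 1) * n" .
  consider "j < k" | "j = k" | "k < j \<and> j \<le> (k - 1) * n" | "(k - 1) * n < j"
    by linarith
  then show ?thesis
  proof cases
    case 1
    then show ?thesis by (auto simp: D_coeff_def)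
  next
    case 2
    have "D_coeff k n j = s_coeff k (n - 1)"
      using 2 k n k_le D_coeff_eq_d_full d_full_low by simp
    moreover have "D_coeff k n (j - 1) = 0" "D_coeff k (n - 1) (j - k) = 0"
      using 2 k by (auto simp: D_coeff_def)
    ultimately show ?thesis using 2 k n by auto
  next
    case 3
    moreover have "n = 2 \<Longrightarrow> j \<noteq> 2 * k - 1" using 3 by auto
    ultimately show ?thesis using k n D_coeff_pred[of k n j] by auto
  next
    case 4
    then show ?thesis using k n k_le D_coeff_pred_above_top[of k n j] by auto
  qed
qed

lemma coeff_one_minus_X_mult:
  fixes p :: "'a :: comm_ring_1 poly"
  shows "coeff ((1 - [:0, 1:]) * p) j = coeff p j - (if j = 0 then 0 else coeff p (j - 1))"
  by (cases j) (simp_all add: algebra_simps)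

lemma coeff_kernel_mult_fps_nth:
  fixes F :: "'a :: comm_ring_1 poly fps"
  shows "coeff (fps_nth ((fps_const (1 - [:0, 1:]) + fps_const (monom 1 k) * fps_X) * F) n) j
       = coeff (fps_nth F n) j - (if j = 0 then 0 else coeff (fps_nth F n) (j - 1))
         + (if n = 0 \<or> j < k then 0 else coeff (fps_nth F (n - 1)) (j - k))"
  by (simp add: distrib_right mult.assoc coeff_one_minus_X_mult coeff_monom_mult)

lemma coeff_S_side_fps_nth:
  "coeff (fps_nth (fps_const (monom 1 k) * fps_X * S_fps k - fps_const (monom 1 (2 * k - 1)) * fps_X ^ 2) n) j
       = (if 2 \<le> n \<and> j = k then s_coeff k (n - 1) else 0) - (if n = 2 \<and> j = 2 * k - 1 then 1 else 0)"
  by (auto simp: mult.assoc coeff_monom_mult S_fps_def coeff_pCons split: nat.split)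

theorem mainTheorem3:
  fixes k :: nat
  assumes "k \<ge> 2"
  shows "(fps_const (1 - [:0, 1:]) + fps_const (monom 1 k) * fps_X) * D_fps k
         = fps_const (monom 1 k) * fps_X * S_fps k - fps_const (monom 1 (2 * k - 1)) * fps_X ^ 2"
  by (intro fps_ext poly_eqI)
    (simp only: coeff_kernel_mult_fps_nth coeff_D_fps_nth D_coeff_recurrence[OF assms] coeff_S_side_fps_nth)

end
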